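(* Let $X,Y$ be Archimedean vector lattices and let $T:X\to Y$ be a linear operator satisfying condition $(\beta)$. Then for each $x\in X$ we have $T(|x|)\in\{Tx\}^{dd}$.
   Context: All vector lattices are Archimedean. For a subset $A$ of a vector lattice $X$, $A^d=\{x\in X: |x|\wedge|a|=0 \text{ for all } a\in A\}$ and $A^{dd}=(A^d)^d$. For $a,b\in X$ we write $a\lhd b$ if $\{a\}^{dd}\subseteq\{b\}^{dd}$. A linear operator $T:X\to Y$ satisfies condition $(\beta)$ if $Ta\lhd Tb$ in $Y$ whenever $a\lhd b$ in $X$. *)

theory Defs
  imports Main "HOL.Real_Vector_Spaces"
begin

class vector_lattice = ordered_real_vector + lattice

definition vabs :: "'a::vector_lattice \<Rightarrow> 'a" where
  "vabs x = sup x (- x)"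

definition archimedean_vl :: "'a::vector_lattice itself \<Rightarrow> bool" where
  "archimedean_vl _ \<longleftrightarrow>
     (\<forall>x y :: 'a. 0 \<le> x \<and> (\<forall>n::nat. real n *\<^sub>R x \<le> y) \<longrightarrow> x = 0)"

definition disj_compl :: "'a::vector_lattice set \<Rightarrow> 'a set" where
  "disj_compl A = {x. \<forall>a\<in>A. inf (vabs x) (vabs a) = 0}"

definition bdisj_le :: "'a::vector_lattice \<Rightarrow> 'a \<Rightarrow> bool" where
  "bdisj_le a b \<longleftrightarrow> disj_compl (disj_compl {a}) \<subseteq> disj_compl (disj_compl {b})"

definition cond_beta :: "('a::vector_lattice \<Rightarrow> 'b::vector_lattice) \<Rightarrow> bool" where
  "cond_beta T \<longleftrightarrow> (\<forall>a b. bdisj_le a b \<longrightarrow> bdisj_le (T a) (T b))"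

end

theory Submission
  imports Defs
begin

text \<open>The element \<open>x\<close> and its modulus have the same disjoint complement, so
  \<open>\<bar>x\<bar> \<lhd> x\<close>; condition (\<open>\<beta>\<close>) carries this to \<open>T\<bar>x\<bar> \<lhd> Tx\<close>, and every element lies in the
  band it generates.\<close>

lemma vabs_nonneg: "0 \<le> vabs (x::'a::vector_lattice)"
proof -
  have "0 = x + - x" by simp
  also have "\<dots> \<le> vabs x + vabs x"
    by (rule add_mono) (simp_all add: vabs_def)
  finally have double_nonneg: "0 \<le> vabs x + vabs x" .
  have "vabs x = (1/2::real) *\<^sub>R (vabs x + vabs x)"
    by (simp add: scaleR_2 [symmetric])
  also have "0 \<le> \<dots>"
    by (rule scaleR_nonneg_nonneg) (simp_all add: double_nonneg)
  finally show ?thesis .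
qed

lemma vabs_vabs [simp]: "vabs (vabs (x::'a::vector_lattice)) = vabs x"
proof -
  have "- vabs x \<le> vabs x"
    using vabs_nonneg [of x] by (simp add: order_trans [of _ 0])
  then show ?thesis
    by (simp add: vabs_def [of "vabs x"] sup_absorb1)
qed

lemma disj_compl_singleton_vabs: "disj_compl {vabs x} = disj_compl {x}"
  by (simp add: disj_compl_def)

lemma mem_disj_compl_disj_compl: "x \<in> disj_compl (disj_compl {x})"
  by (simp add: disj_compl_def inf_commute)

lemma bdisj_le_vabs: "bdisj_le (vabs x) x"
  by (simp add: bdisj_le_def disj_compl_singleton_vabs)

lemma bdisj_le_imp_mem_disj_compl_disj_compl:
  "bdisj_le a b \<Longrightarrow> a \<in> disj_compl (disj_compl {b})"
  using mem_disj_compl_disj_compl [of a] by (auto simp: bdisj_le_def)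

theorem corollary2p3:
  fixes T :: "'a::vector_lattice \<Rightarrow> 'b::vector_lattice"
  assumes "archimedean_vl TYPE('a)"
    and "archimedean_vl TYPE('b)"
    and "linear T"
    and "cond_beta T"
  shows "\<forall>x. T (vabs x) \<in> disj_compl (disj_compl {T x})"
proof
  fix x :: 'a
  have "bdisj_le (T (vabs x)) (T x)"
    using assms(4) bdisj_le_vabs unfolding cond_beta_def by blast
  then show "T (vabs x) \<in> disj_compl (disj_compl {T x})"
    by (rule bdisj_le_imp_mem_disj_compl_disj_compl)
qed

end
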